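(* For every integer $n \geq 3$, the line graph $L(K_n)$ of the complete graph $K_n$ satisfies $c_V(L(K_n)) = 2(n-2)$, $c_E(L(K_n)) \geq n(n-2)/3$, and $c_{E,\mathrm{r}}(L(K_n)) \geq n^2/12$.
   Context: The line graph $L(G)$ has the edges of $G$ as vertices, two being adjacent iff they share an endpoint. Games: players alternate turns, cops first; initially the cop player places all cops, then the robber is placed on a vertex (several pieces may share a position). In a turn each piece of the moving player may stay or make one move (no obligation to move). The robber sits on vertices and moves to adjacent vertices; $v_r$ is his current vertex. Vertex version: cops on vertices moving to adjacent vertices; cops win when every neighbor of $v_r$ is occupied by a cop; $c_V(G)$ is the least number of cops forcing a win in finitely many turns. Edge version: cops sit on edges; a cop on edge $e$ may move to any edge sharing an endpoint with $e$; cops win when every edge incident to $v_r$ is occupied; number $c_E(G)$. Restrictive edge version: as the edge version, but the robber may not move along an edge currently occupied by a cop; number $c_{E,\mathrm{r}}(G)$. *)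

theory Defs
  imports Complex_Main
begin

(* A graph is given by a vertex set V and an adjacency relation adj
   (assumed symmetric and irreflexive on V). *)

definition graph_edges :: "'a set \<Rightarrow> ('a \<Rightarrow> 'a \<Rightarrow> bool) \<Rightarrow> 'a set set" where
  "graph_edges V adj = {{u, v} | u v. u \<in> V \<and> v \<in> V \<and> adj u v}"

definition Kn_verts :: "nat \<Rightarrow> nat set" where
  "Kn_verts n = {..<n}"

definition Kn_adj :: "nat \<Rightarrow> nat \<Rightarrow> bool" where
  "Kn_adj u v = (u \<noteq> v)"

definition line_verts :: "'a set \<Rightarrow> ('a \<Rightarrow> 'a \<Rightarrow> bool) \<Rightarrow> 'a set set" where
  "line_verts V adj = graph_edges V adj"

definition line_adj :: "'a set \<Rightarrow> 'a set \<Rightarrow> bool" where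
  "line_adj e f = (e \<noteq> f \<and> e \<inter> f \<noteq> {})"

(* Cop positions of type 'c, robber positions of type 'a.
   cstep x y : a single cop may move from x to y (staying is always allowed).
   rstep C r r' : robber at r may move to r' when cops are at C (staying always allowed).
   capt C r : the cops have won.
   cops_force t C r : cops can force a win in finitely many turns from the
   position (cops at C, robber at r), t = True iff it is the cops' turn. *)
inductive cops_force ::
  "('c \<Rightarrow> 'c \<Rightarrow> bool) \<Rightarrow> ('c list \<Rightarrow> 'a \<Rightarrow> 'a \<Rightarrow> bool) \<Rightarrow> ('c list \<Rightarrow> 'a \<Rightarrow> bool)
   \<Rightarrow> bool \<Rightarrow> 'c list \<Rightarrow> 'a \<Rightarrow> bool"
  for cstep rstep capt where
  capture: "capt C r \<Longrightarrow> cops_force cstep rstep capt t C r"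
| cop_move: "list_all2 (\<lambda>x y. x = y \<or> cstep x y) C C' \<Longrightarrow>
      cops_force cstep rstep capt False C' r \<Longrightarrow> cops_force cstep rstep capt True C r"
| robber_move: "\<forall>r'. (r' = r \<or> rstep C r r') \<longrightarrow> cops_force cstep rstep capt True C r' \<Longrightarrow>
      cops_force cstep rstep capt False C r"

definition game_number ::
  "'a set \<Rightarrow> 'c set \<Rightarrow> ('c \<Rightarrow> 'c \<Rightarrow> bool) \<Rightarrow> ('c list \<Rightarrow> 'a \<Rightarrow> 'a \<Rightarrow> bool)
   \<Rightarrow> ('c list \<Rightarrow> 'a \<Rightarrow> bool) \<Rightarrow> nat" where
  "game_number V P cstep rstep capt =
     (LEAST k. \<exists>C. length C = k \<and> set C \<subseteq> P \<and>
        (\<forall>r\<in>V. cops_force cstep rstep capt True C r))"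

definition cV :: "'a set \<Rightarrow> ('a \<Rightarrow> 'a \<Rightarrow> bool) \<Rightarrow> nat" where
  "cV V adj = game_number V V
     (\<lambda>x y. y \<in> V \<and> adj x y)
     (\<lambda>C r r'. r' \<in> V \<and> adj r r')
     (\<lambda>C r. \<forall>v\<in>V. adj r v \<longrightarrow> v \<in> set C)"

definition cE :: "'a set \<Rightarrow> ('a \<Rightarrow> 'a \<Rightarrow> bool) \<Rightarrow> nat" where
  "cE V adj = game_number V (graph_edges V adj)
     (\<lambda>e f. f \<in> graph_edges V adj \<and> e \<inter> f \<noteq> {})
     (\<lambda>C r r'. r' \<in> V \<and> adj r r')
     (\<lambda>C r. \<forall>e\<in>graph_edges V adj. r \<in> e \<longrightarrow> e \<in> set C)"

definition cEr :: "'a set \<Rightarrow> ('a \<Rightarrow> 'a \<Rightarrow> bool) \<Rightarrow> nat" where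
  "cEr V adj = game_number V (graph_edges V adj)
     (\<lambda>e f. f \<in> graph_edges V adj \<and> e \<inter> f \<noteq> {})
     (\<lambda>C r r'. r' \<in> V \<and> adj r r' \<and> {r, r'} \<notin> set C)
     (\<lambda>C r. \<forall>e\<in>graph_edges V adj. r \<in> e \<longrightarrow> e \<in> set C)"

end

theory Submission
  imports Defs
begin

text \<open>
  A robber on the edge \<open>r\<close> of \<open>K\<^sub>n\<close> is caught in the vertex version only when all \<open>2(n - 2)\<close>
  edges meeting \<open>r\<close> in one endpoint are occupied, which bounds \<open>c\<^sub>V\<close> from below; conversely,
  cops on the \<open>2(n - 2)\<close> edges \<open>{0, y}\<close>, \<open>{n - 1, y}\<close> can occupy this neighbourhood of any \<open>r\<close>
  in a single move.

  In the edge versions a cop occupies two edges of \<open>K\<^sub>n\<close> with a common endpoint and so covers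
  three vertices; with \<open>k\<close> cops some vertex is covered by fewer than \<open>h\<close> cops once \<open>3k < hn\<close>.
  The robber keeps an endpoint \<open>a\<close> of his edge \<open>r\<close> covered by fewer than \<open>h \<le> n - 2\<close> cops.
  After the cops' move, a cop on one of the \<open>n - 2\<close> edges \<open>{r, {a, z}}\<close> of \<open>L(K\<^sub>n)\<close> must have
  covered \<open>a\<close> before, so he is not caught, and he escapes to an edge through a vertex that is now
  light. Taking \<open>h = n - 2\<close> gives \<open>c\<^sub>E \<ge> n(n - 2)/3\<close>. The restrictive robber needs an exit
  \<open>{a, l}\<close> not blocked by a cop; there are at least \<open>h\<close> light \<open>l\<close> when \<open>3k < h(n + 1 - h)\<close>, and
  \<open>h \<approx> n/2\<close> gives \<open>n\<^sup>2/12\<close>.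
\<close>

section \<open>Reachability games\<close>

abbreviation cops_move :: "('c \<Rightarrow> 'c \<Rightarrow> bool) \<Rightarrow> 'c list \<Rightarrow> 'c list \<Rightarrow> bool" where
  "cops_move cstep C C' \<equiv> list_all2 (\<lambda>x y. x = y \<or> cstep x y) C C'"

lemma cops_force_capture_reachable:
  assumes "cops_force cstep rstep capt t C r"
  obtains C' where "length C' = length C" "capt C' r"
  using assms
proof (induction arbitrary: thesis rule: cops_force.induct)
  case (cop_move C C' r)
  then show ?case by (metis list_all2_lengthD)
qed auto

lemma robber_escapes:
  assumes step: "\<And>C C' r. Inv C r \<Longrightarrow> cops_move cstep C C' \<Longrightarrow>
      \<not> capt C' r \<and> (\<exists>r'. (r' = r \<or> rstep C' r r') \<and> Inv C' r')"
    and start: "Inv C r"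
  shows "\<not> cops_force cstep rstep capt True C r"
proof
  \<comment> \<open>In a robber-turn position the invariant holds for the cops' previous position.\<close>
  have "False" if "cops_force cstep rstep capt t C r"
    and "if t then Inv C r else \<exists>C0. cops_move cstep C0 C \<and> Inv C0 r" for t C r
    using that
  proof (induction rule: cops_force.induct)
    case (capture C r t)
    then obtain C0 where "cops_move cstep C0 C" "Inv C0 r"
      using list_all2_refl[of "\<lambda>x y. x = y \<or> cstep x y" C] by (cases t) auto
    with step capture.hyps show ?case by blast
  next
    case (robber_move r C)
    then obtain C0 where "cops_move cstep C0 C" "Inv C0 r" by auto
    with step obtain r' where "r' = r \<or> rstep C r r'" "Inv C r'" by blast
    with robber_move.IH show ?case by auto
  qed auto
  with start show "cops_force cstep rstep capt True C r \<Longrightarrow> False" by fastforce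
qed

lemma game_number_attained:
  assumes "set C \<subseteq> P" "\<forall>r\<in>V. cops_force cstep rstep capt True C r"
  obtains C' where "length C' = game_number V P cstep rstep capt" "set C' \<subseteq> P"
    "\<forall>r\<in>V. cops_force cstep rstep capt True C' r"
proof -
  let ?W = "\<lambda>k. \<exists>C. length C = k \<and> set C \<subseteq> P \<and> (\<forall>r\<in>V. cops_force cstep rstep capt True C r)"
  have "?W (length C)" using assms by blast
  then have "?W (LEAST k. ?W k)" by (rule LeastI)
  then show thesis using that unfolding game_number_def by blast
qed

lemma game_number_le:
  assumes "set C \<subseteq> P" "\<forall>r\<in>V. cops_force cstep rstep capt True C r"
  shows "game_number V P cstep rstep capt \<le> length C"
proof -
  have "\<exists>C'. length C' = length C \<and> set C' \<subseteq> P \<and> (\<forall>r\<in>V. cops_force cstep rstep capt True C' r)"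
    using assms by blast
  then show ?thesis unfolding game_number_def by (rule Least_le)
qed

lemma occupying_all_positions_wins:
  assumes "finite P" "\<And>C r. set C = P \<Longrightarrow> r \<in> V \<Longrightarrow> capt C r"
  obtains C where "set C = P" "\<forall>r\<in>V. cops_force cstep rstep capt True C r"
proof -
  obtain C where "set C = P" using finite_list[OF assms(1)] by blast
  with assms(2) show thesis by (intro that) (auto intro: cops_force.capture)
qed

section \<open>The line graph of the complete graph\<close>

abbreviation LK_verts :: "nat \<Rightarrow> nat set set" where
  "LK_verts n \<equiv> line_verts (Kn_verts n) Kn_adj"

abbreviation LK_edges :: "nat \<Rightarrow> nat set set set" where
  "LK_edges n \<equiv> graph_edges (LK_verts n) line_adj"

lemma LK_verts_iff: "e \<in> LK_verts n \<longleftrightarrow> (\<exists>u v. e = {u, v} \<and> u < n \<and> v < n \<and> u \<noteq> v)"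
  by (auto simp: line_verts_def graph_edges_def Kn_verts_def Kn_adj_def)

lemma doubleton_in_LK_verts [simp]: "{u, v} \<in> LK_verts n \<longleftrightarrow> u < n \<and> v < n \<and> u \<noteq> v"
  unfolding LK_verts_iff by (auto simp: doubleton_eq_iff)

lemma LK_verts_other_end:
  assumes "r \<in> LK_verts n" "a \<in> r"
  obtains b where "r = {a, b}" "a \<noteq> b" "a < n" "b < n"
  using assms unfolding LK_verts_iff by auto

lemma LK_edges_iff:
  "p \<in> LK_edges n \<longleftrightarrow>
    (\<exists>e f. p = {e, f} \<and> e \<in> LK_verts n \<and> f \<in> LK_verts n \<and> e \<noteq> f \<and> e \<inter> f \<noteq> {})"
  unfolding graph_edges_def line_adj_def by blast

lemma finite_LK_verts: "finite (LK_verts n)"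
proof -
  have "LK_verts n \<subseteq> Pow {..<n}" by (force simp: LK_verts_iff)
  then show ?thesis by (rule finite_subset) simp
qed

lemma finite_LK_edges: "finite (LK_edges n)"
proof -
  have "LK_edges n \<subseteq> Pow (LK_verts n)" by (force simp: LK_edges_iff)
  then show ?thesis using finite_LK_verts by (simp add: finite_subset)
qed

lemma card_outside_LK_vert:
  assumes "r \<in> LK_verts n"
  shows "card ({..<n} - r) = n - 2"
proof -
  from assms have "r \<subseteq> {..<n}" "card r = 2" by (auto simp: LK_verts_iff)
  then show ?thesis by (simp add: card_Diff_subset finite_subset)
qed

lemma line_adj_LK_verts_iff:
  assumes "r \<in> LK_verts n" "v \<in> LK_verts n"
  shows "line_adj r v \<longleftrightarrow> (\<exists>u\<in>r. \<exists>x<n. x \<notin> r \<and> v = {u, x})"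
  using assms by (auto simp: LK_verts_iff line_adj_def doubleton_eq_iff)

section \<open>The vertex version\<close>

lemma card_LK_neighbourhood:
  assumes "r \<in> LK_verts n"
  shows "2 * (n - 2) \<le> card {v \<in> LK_verts n. line_adj r v}"
proof -
  obtain a b where r: "r = {a, b}" "a \<noteq> b" "a < n" "b < n" using assms by (auto simp: LK_verts_iff)
  let ?X = "{..<n} - r"
  have "inj_on (\<lambda>x. {a, x}) ?X" "inj_on (\<lambda>x. {b, x}) ?X"
    by (auto intro!: inj_onI simp: doubleton_eq_iff r)
  moreover have "(\<lambda>x. {a, x}) ` ?X \<inter> (\<lambda>x. {b, x}) ` ?X = {}" using r by (auto simp: doubleton_eq_iff)
  ultimately have "2 * (n - 2) = card ((\<lambda>x. {a, x}) ` ?X \<union> (\<lambda>x. {b, x}) ` ?X)"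
    using card_outside_LK_vert[OF assms] by (simp add: card_Un_disjoint card_image)
  also have "\<dots> \<le> card {v \<in> LK_verts n. line_adj r v}"
  proof (rule card_mono)
    show "finite {v \<in> LK_verts n. line_adj r v}" using finite_LK_verts by simp
    show "(\<lambda>x. {a, x}) ` ?X \<union> (\<lambda>x. {b, x}) ` ?X \<subseteq> {v \<in> LK_verts n. line_adj r v}"
      using r by (auto simp: line_adj_def doubleton_eq_iff)
  qed
  finally show ?thesis .
qed

definition double_star_cops :: "nat \<Rightarrow> nat set list" where
  "double_star_cops n = map (\<lambda>(c, y). {c, y}) (List.product [0, n - 1] [1..<n - 1])"

lemma double_star_cops_in_LK_verts: "set (double_star_cops n) \<subseteq> LK_verts n"
  by (auto simp: double_star_cops_def)

lemma length_double_star_cops: "length (double_star_cops n) = 2 * (n - 2)"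
  by (simp add: double_star_cops_def)

lemma double_star_cops_capture_in_one_move:
  assumes n: "n \<ge> 3" and r: "r \<in> LK_verts n"
  obtains C' where "cops_move (\<lambda>x y. y \<in> LK_verts n \<and> line_adj x y) (double_star_cops n) C'"
    "\<forall>v\<in>LK_verts n. line_adj r v \<longrightarrow> v \<in> set C'"
proof -
  obtain \<alpha> \<beta> where \<alpha>\<beta>: "r = {\<alpha>, \<beta>}" "\<alpha> \<noteq> \<beta>" "\<alpha> < n" "\<beta> < n"
    using r by (auto simp: LK_verts_iff)
  define target where "target = (\<lambda>(c, y). if y \<notin> r then {if c = 0 then \<alpha> else \<beta>, y}
    else if c \<in> r then {0, n - 1} else {c, y})"
  let ?I = "List.product [0, n - 1] [1..<n - 1]"
  have reach: "{c, y} \<inter> target (c, y) \<noteq> {} \<and> target (c, y) \<in> LK_verts n"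
    if "c \<in> {0, n - 1}" "y \<in> {1..<n - 1}" for c y
    using that n \<alpha>\<beta> by (auto simp: target_def)
  have move: "cops_move (\<lambda>x y. y \<in> LK_verts n \<and> line_adj x y) (double_star_cops n) (map target ?I)"
    unfolding double_star_cops_def list.rel_map list_all2_same
  proof
    fix p assume "p \<in> set ?I"
    then obtain c y where "p = (c, y)" "c \<in> {0, n - 1}" "y \<in> {1..<n - 1}" by auto
    with reach[of c y] show "(\<lambda>(c, y). {c, y}) p = target p
        \<or> target p \<in> LK_verts n \<and> line_adj ((\<lambda>(c, y). {c, y}) p) (target p)"
      unfolding line_adj_def by auto
  qed
  have cover: "v \<in> target ` ({0, n - 1} \<times> {1..<n - 1})" if "v \<in> LK_verts n" "line_adj r v" for v
  proof -
    have hit: "v \<in> target ` ({0, n - 1} \<times> {1..<n - 1})"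
      if "c \<in> {0, n - 1}" "y \<in> {1..<n - 1}" "v = target (c, y)" for c y
      using that(3) by (rule image_eqI) (use that(1,2) in blast)
    from that r obtain u x where ux: "u \<in> r" "x < n" "x \<notin> r" "v = {u, x}"
      by (auto simp: line_adj_LK_verts_iff)
    have outer: "z \<in> {1..<n - 1} \<or> z \<in> {0, n - 1}" if "z < n" for z
      using that by auto
    show ?thesis
    proof (cases "x \<in> {1..<n - 1}")
      case True
      have "u = \<alpha> \<or> u = \<beta>" using ux(1) \<alpha>\<beta>(1) by blast
      with n ux have "v = target (if u = \<alpha> then 0 else n - 1, x)"
        by (auto simp: target_def)
      with True show ?thesis by (intro hit[of "if u = \<alpha> then 0 else n - 1" x]) auto
    next
      case False
      then have x: "x \<in> {0, n - 1}" using outer ux(2) by blast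
      show ?thesis
      proof (cases "u \<in> {1..<n - 1}")
        case True
        with ux have "v = target (x, u)" by (auto simp: target_def insert_commute)
        with True x show ?thesis by (intro hit[of x u])
      next
        case False
        then have u: "u \<in> {0, n - 1}" using outer \<alpha>\<beta>(1,3,4) ux(1) by blast
        obtain w where w: "r = {u, w}" "u \<noteq> w" "w < n" using r ux(1) by (rule LK_verts_other_end)
        with x u ux(3,4) have "w \<in> {1..<n - 1}" "v = {0, n - 1}" by auto
        moreover have "target (u, w) = {0, n - 1}" using w by (simp add: target_def)
        ultimately show ?thesis using u by (intro hit[of u w]) auto
      qed
    qed
  qed
  show thesis
  proof (rule that[OF move])
    show "\<forall>v\<in>LK_verts n. line_adj r v \<longrightarrow> v \<in> set (map target ?I)"
      unfolding set_map set_product list.set set_upt using cover by blast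
  qed
qed

theorem cV_LK:
  assumes n: "n \<ge> 3"
  shows "cV (LK_verts n) line_adj = 2 * (n - 2)"
proof (rule antisym)
  let ?cstep = "\<lambda>x y. y \<in> LK_verts n \<and> line_adj x y"
  let ?rstep = "\<lambda>(C :: nat set list) r r'. r' \<in> LK_verts n \<and> line_adj r r'"
  let ?capt = "\<lambda>C r. \<forall>v\<in>LK_verts n. line_adj r v \<longrightarrow> v \<in> set C"
  have star_wins: "\<forall>r\<in>LK_verts n. cops_force ?cstep ?rstep ?capt True (double_star_cops n) r"
  proof
    fix r assume "r \<in> LK_verts n"
    with n obtain C' where move: "cops_move ?cstep (double_star_cops n) C'" and "?capt C' r"
      by (rule double_star_cops_capture_in_one_move)
    then have "cops_force ?cstep ?rstep ?capt False C' r" by (intro cops_force.capture)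
    with move show "cops_force ?cstep ?rstep ?capt True (double_star_cops n) r"
      by (rule cops_force.cop_move)
  qed
  have "cV (LK_verts n) line_adj \<le> length (double_star_cops n)"
    unfolding cV_def using double_star_cops_in_LK_verts star_wins by (rule game_number_le)
  then show "cV (LK_verts n) line_adj \<le> 2 * (n - 2)" by (simp only: length_double_star_cops)
  obtain C where C: "length C = cV (LK_verts n) line_adj"
    "\<forall>r\<in>LK_verts n. cops_force ?cstep ?rstep ?capt True C r"
    using game_number_attained[OF double_star_cops_in_LK_verts star_wins] unfolding cV_def by blast
  have r01: "{0, 1} \<in> LK_verts n" using n by simp
  with C(2) have "cops_force ?cstep ?rstep ?capt True C {0, 1}" ..
  then obtain C' where C': "length C' = length C" "?capt C' {0, 1}"
    by (rule cops_force_capture_reachable)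
  have "2 * (n - 2) \<le> card {v \<in> LK_verts n. line_adj {0, 1} v}"
    using r01 by (rule card_LK_neighbourhood)
  also have "\<dots> \<le> card (set C')" using C'(2) by (intro card_mono) auto
  also have "\<dots> \<le> length C'" by (rule card_length)
  finally show "2 * (n - 2) \<le> cV (LK_verts n) line_adj" using C(1) C'(1) by simp
qed

section \<open>The edge versions\<close>

lemma card_Union_LK_edge:
  assumes "p \<in> LK_edges n"
  shows "\<Union>p \<subseteq> {..<n}" "card (\<Union>p) \<le> 3"
proof -
  obtain e f where p: "p = {e, f}" "e \<in> LK_verts n" "f \<in> LK_verts n" "e \<inter> f \<noteq> {}"
    using assms unfolding LK_edges_iff by blast
  then obtain c where c: "c \<in> e" "c \<in> f" by blast
  obtain x y where "e = {c, x}" "f = {c, y}" "c < n" "x < n" "y < n"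
    using p(2,3) c by (metis LK_verts_other_end)
  then have "\<Union>p = {c, x, y}" "{c, x, y} \<subseteq> {..<n}" using p(1) by auto
  then show "\<Union>p \<subseteq> {..<n}" "card (\<Union>p) \<le> 3" by (auto simp: card_insert_if)
qed

text \<open>For a cop on the edge \<open>p\<close> of \<open>L(K\<^sub>n)\<close>, \<open>\<Union>p\<close> is the set of vertices of \<open>K\<^sub>n\<close> it covers.\<close>

definition vertex_load :: "'a set set list \<Rightarrow> 'a \<Rightarrow> nat" where
  "vertex_load C a = length (filter (\<lambda>p. a \<in> \<Union>p) C)"

lemma sum_vertex_load_le:
  assumes "set C \<subseteq> LK_edges n"
  shows "(\<Sum>a<n. vertex_load C a) \<le> 3 * length C"
  using assms
proof (induction C)
  case Nil
  then show ?case by (simp add: vertex_load_def)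
next
  case (Cons p C)
  then have p: "\<Union>p \<subseteq> {..<n}" "card (\<Union>p) \<le> 3" using card_Union_LK_edge by auto
  have "vertex_load (p # C) a = (if a \<in> \<Union>p then 1 else 0) + vertex_load C a" for a
    by (simp add: vertex_load_def)
  then have "(\<Sum>a<n. vertex_load (p # C) a) = card {a \<in> {..<n}. a \<in> \<Union>p} + (\<Sum>a<n. vertex_load C a)"
    by (simp only: sum.distrib card_eq_sum sum.inter_filter[OF finite_lessThan])
  also have "{a \<in> {..<n}. a \<in> \<Union>p} = \<Union>p" using p(1) by blast
  also have "card (\<Union>p) + (\<Sum>a<n. vertex_load C a) \<le> 3 + 3 * length C" using Cons p by simp
  finally show ?case by simp
qed

lemma card_heavy_vertices_le:
  assumes "set C \<subseteq> LK_edges n"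
  shows "h * card {a. a < n \<and> h \<le> vertex_load C a} \<le> 3 * length C"
proof -
  let ?H = "{a. a < n \<and> h \<le> vertex_load C a}"
  have "h * card ?H = (\<Sum>a\<in>?H. h)" by simp
  also have "\<dots> \<le> (\<Sum>a\<in>?H. vertex_load C a)" by (rule sum_mono) simp
  also have "\<dots> \<le> (\<Sum>a<n. vertex_load C a)" by (rule sum_mono2) auto
  also have "\<dots> \<le> 3 * length C" using assms by (rule sum_vertex_load_le)
  finally show ?thesis .
qed

lemma light_vertex_exists:
  assumes "set C \<subseteq> LK_edges n" "3 * length C < h * n"
  obtains a where "a < n" "vertex_load C a < h"
proof -
  have "\<not> (\<forall>a<n. h \<le> vertex_load C a)"
  proof
    assume "\<forall>a<n. h \<le> vertex_load C a"
    then have "{a. a < n \<and> h \<le> vertex_load C a} = {..<n}" by auto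
    with card_heavy_vertices_le[OF assms(1), of h] assms(2) show False by simp
  qed
  then show thesis using that by (auto simp: not_le)
qed

lemma length_filter_le_if_list_all2:
  assumes "list_all2 R xs ys" "\<And>x y. R x y \<Longrightarrow> Q y \<Longrightarrow> P x"
  shows "length (filter Q ys) \<le> length (filter P xs)"
  using assms by (induction rule: list_all2_induct) auto

text \<open>A cop can only reach a position all of whose edges contain \<open>a\<close> from a position covering \<open>a\<close>.\<close>

lemma card_le_vertex_load_before_move:
  assumes move: "cops_move (\<lambda>p q. q \<in> Q \<and> p \<inter> q \<noteq> {}) C C'"
    and F: "F \<subseteq> set C'" "\<And>f. f \<in> F \<Longrightarrow> f \<noteq> {} \<and> (\<forall>e\<in>f. a \<in> e)"
  shows "card F \<le> vertex_load C a"
proof -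
  have "F = set (filter (\<lambda>q. q \<in> F) C')" using F(1) by auto
  then have "card F \<le> length (filter (\<lambda>q. q \<in> F) C')" by (metis card_length)
  also have "\<dots> \<le> vertex_load C a"
    unfolding vertex_load_def using move by (rule length_filter_le_if_list_all2) (use F(2) in blast)
  finally show ?thesis .
qed

abbreviation edge_cop_step :: "nat \<Rightarrow> nat set set \<Rightarrow> nat set set \<Rightarrow> bool" where
  "edge_cop_step n p q \<equiv> q \<in> LK_edges n \<and> p \<inter> q \<noteq> {}"

abbreviation LK_edge_capture :: "nat \<Rightarrow> nat set set list \<Rightarrow> nat set \<Rightarrow> bool" where
  "LK_edge_capture n C r \<equiv> \<forall>e\<in>LK_edges n. r \<in> e \<longrightarrow> e \<in> set C"

lemma cops_move_edge_cop_step: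
  assumes "cops_move (edge_cop_step n) C C'" "set C \<subseteq> LK_edges n"
  shows "set C' \<subseteq> LK_edges n" "length C' = length C"
  using assms by (induction rule: list_all2_induct) auto

lemma fan_not_occupied:
  assumes r: "r \<in> LK_verts n" "a \<in> r" and L: "L \<subseteq> {..<n} - r"
    and light: "vertex_load C a < card L"
    and move: "cops_move (edge_cop_step n) C C'"
  obtains z where "z \<in> L" "{r, {a, z}} \<in> LK_edges n" "{r, {a, z}} \<notin> set C'"
proof -
  obtain b where b: "r = {a, b}" "a \<noteq> b" "a < n" "b < n" using r by (rule LK_verts_other_end)
  let ?fan = "(\<lambda>z. {r, {a, z}}) ` L"
  have fan: "?fan \<subseteq> LK_edges n"
  proof
    fix f assume "f \<in> ?fan"
    then obtain z where z: "z \<in> L" "f = {r, {a, z}}" by blast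
    with L b have "{a, z} \<in> LK_verts n" "r \<noteq> {a, z}" "r \<inter> {a, z} \<noteq> {}" by auto
    with z(2) r(1) show "f \<in> LK_edges n" unfolding LK_edges_iff by blast
  qed
  have "inj_on (\<lambda>z. {r, {a, z}}) L"
    using L b by (auto intro!: inj_onI simp: doubleton_eq_iff)
  then have card_fan: "card ?fan = card L" by (rule card_image)
  have spokes: "f \<noteq> {} \<and> (\<forall>e\<in>f. a \<in> e)" if "f \<in> ?fan" for f
    using that r(2) by auto
  have "\<not> ?fan \<subseteq> set C'"
  proof
    assume "?fan \<subseteq> set C'"
    from card_le_vertex_load_before_move[OF move this spokes] card_fan light show False by simp
  qed
  then show thesis using that fan by blast
qed

lemma not_captured_after_move:
  assumes "r \<in> LK_verts n" "a \<in> r" "vertex_load C a < n - 2"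
    and "cops_move (edge_cop_step n) C C'"
  shows "\<not> LK_edge_capture n C' r"
proof -
  obtain z where "{r, {a, z}} \<in> LK_edges n" "{r, {a, z}} \<notin> set C'"
    using fan_not_occupied[OF assms(1,2) subset_refl _ assms(4)] assms(3)
    by (auto simp: card_outside_LK_vert[OF assms(1)])
  then show ?thesis by blast
qed

lemma LK_step_to_outside:
  assumes "r \<in> LK_verts n" "a \<in> r" "l < n" "l \<notin> r"
  shows "{a, l} \<in> LK_verts n" "line_adj r {a, l}"
  using assms by (auto elim: LK_verts_other_end simp: line_adj_def doubleton_eq_iff)

definition robber_safe :: "nat \<Rightarrow> nat \<Rightarrow> nat \<Rightarrow> nat set set list \<Rightarrow> nat set \<Rightarrow> bool" where
  "robber_safe n k h C r \<longleftrightarrow> r \<in> LK_verts n \<and> set C \<subseteq> LK_edges n \<and> length C = k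
     \<and> (\<exists>a\<in>r. vertex_load C a < h)"

lemma robber_safe_start:
  assumes "n \<ge> 2" "set C \<subseteq> LK_edges n" "3 * length C < h * n"
  obtains r where "robber_safe n (length C) h C r"
proof -
  obtain a where a: "a < n" "vertex_load C a < h" using light_vertex_exists assms(2,3) by blast
  let ?b = "if a = 0 then 1 else 0"
  have "{a, ?b} \<in> LK_verts n" using assms(1) a(1) by simp
  with a assms(2) show thesis using that unfolding robber_safe_def by blast
qed

lemma robber_safe_step:
  assumes safe: "robber_safe n k h C r" and h: "h \<le> n - 2" "3 * k < h * n"
    and move: "cops_move (edge_cop_step n) C C'"
  shows "\<not> LK_edge_capture n C' r
    \<and> (\<exists>r'. (r' = r \<or> r' \<in> LK_verts n \<and> line_adj r r') \<and> robber_safe n k h C' r')"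
proof -
  from safe obtain a where r: "r \<in> LK_verts n" "a \<in> r" "vertex_load C a < h"
    and C: "set C \<subseteq> LK_edges n" "length C = k"
    unfolding robber_safe_def by blast
  have C': "set C' \<subseteq> LK_edges n" "length C' = k"
    using cops_move_edge_cop_step[OF move C(1)] C(2) by auto
  have free: "\<not> LK_edge_capture n C' r"
    using not_captured_after_move[OF r(1,2) _ move] r(3) h(1) by simp
  from C' h(2) have "3 * length C' < h * n" by simp
  with C'(1) obtain l where l: "l < n" "vertex_load C' l < h" by (rule light_vertex_exists)
  show ?thesis
  proof (cases "l \<in> r")
    case True
    then have "robber_safe n k h C' r" using r(1) C' l unfolding robber_safe_def by blast
    with free show ?thesis by blast
  next
    case False
    note step = LK_step_to_outside[OF r(1,2) l(1) False]
    have "robber_safe n k h C' {a, l}" using step(1) C' l unfolding robber_safe_def by blast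
    with step free show ?thesis by blast
  qed
qed

text \<open>Against the restrictive robber, at least \<open>h\<close> vertices stay light after the cops' move, so
  fewer than \<open>h\<close> cops cannot block all the corresponding exits from \<open>r\<close>.\<close>

lemma robber_safe_step_restrictive:
  assumes safe: "robber_safe n k h C r" and h: "h \<le> n - 2" "3 * k < h * (n + 1 - h)"
    and move: "cops_move (edge_cop_step n) C C'"
  shows "\<not> LK_edge_capture n C' r
    \<and> (\<exists>r'. (r' = r \<or> r' \<in> LK_verts n \<and> line_adj r r' \<and> {r, r'} \<notin> set C')
           \<and> robber_safe n k h C' r')"
proof -
  from safe obtain a where r: "r \<in> LK_verts n" "a \<in> r" "vertex_load C a < h"
    and C: "set C \<subseteq> LK_edges n" "length C = k"
    unfolding robber_safe_def by blast
  have C': "set C' \<subseteq> LK_edges n" "length C' = k"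
    using cops_move_edge_cop_step[OF move C(1)] C(2) by auto
  have free: "\<not> LK_edge_capture n C' r"
    using not_captured_after_move[OF r(1,2) _ move] r(3) h(1) by simp
  show ?thesis
  proof (cases "\<exists>c\<in>r. vertex_load C' c < h")
    case True
    then have "robber_safe n k h C' r" using r(1) C' unfolding robber_safe_def by blast
    with free show ?thesis by blast
  next
    case False
    let ?L = "{v. v < n \<and> vertex_load C' v < h}"
    let ?H = "{v. v < n \<and> h \<le> vertex_load C' v}"
    have L: "?L \<subseteq> {..<n} - r" using False by auto
    have "?L = {..<n} - ?H" by auto
    then have "card ?L = n - card ?H" by (simp add: card_Diff_subset subset_eq)
    moreover have "h * card ?H < h * (n + 1 - h)"
      using card_heavy_vertices_le[OF C'(1), of h] C'(2) h(2) by linarith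
    ultimately have "vertex_load C a < card ?L" using r(3) by (simp add: diff_le_mono2)
    then obtain l where l: "l \<in> ?L" "{r, {a, l}} \<notin> set C'"
      using fan_not_occupied[OF r(1,2) L _ move] by blast
    with L have "l < n" "l \<notin> r" by auto
    note step = LK_step_to_outside[OF r(1,2) this]
    have "robber_safe n k h C' {a, l}" using step(1) C' l(1) unfolding robber_safe_def by blast
    with step free l(2) show ?thesis by blast
  qed
qed

lemma LK_edge_game_attained:
  obtains C where
    "length C = game_number (LK_verts n) (LK_edges n) (edge_cop_step n) rstep
       (LK_edge_capture n)"
    "set C \<subseteq> LK_edges n"
    "\<forall>r\<in>LK_verts n. cops_force (edge_cop_step n) rstep
       (LK_edge_capture n) True C r"
proof -
  obtain C0 where "set C0 = LK_edges n"
    "\<forall>r\<in>LK_verts n. cops_force (edge_cop_step n) rstep (LK_edge_capture n) True C0 r"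
    using finite_LK_edges[of n]
    by (rule occupying_all_positions_wins[where V = "LK_verts n" and capt = "LK_edge_capture n"]) auto
  then have "set C0 \<subseteq> LK_edges n"
    "\<forall>r\<in>LK_verts n. cops_force (edge_cop_step n) rstep (LK_edge_capture n) True C0 r"
    by simp_all
  then show thesis using that by (rule game_number_attained)
qed

theorem cE_LK_ge:
  assumes n: "n \<ge> 3"
  shows "n * (n - 2) \<le> 3 * cE (LK_verts n) line_adj"
proof (rule ccontr)
  let ?rstep = "\<lambda>(C :: nat set set list) r r'. r' \<in> LK_verts n \<and> line_adj r r'"
  obtain C where C: "length C = cE (LK_verts n) line_adj" "set C \<subseteq> LK_edges n"
    "\<forall>r\<in>LK_verts n. cops_force (edge_cop_step n) ?rstep
       (LK_edge_capture n) True C r"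
    unfolding cE_def by (rule LK_edge_game_attained)
  assume "\<not> ?thesis"
  then have few: "3 * length C < (n - 2) * n" using C(1) by (simp add: mult.commute)
  from n have "n \<ge> 2" by simp
  from this C(2) few obtain r where safe: "robber_safe n (length C) (n - 2) C r"
    by (rule robber_safe_start)
  have "\<not> cops_force (edge_cop_step n) ?rstep (LK_edge_capture n) True C r"
    using robber_safe_step[OF _ order_refl few] safe by (rule robber_escapes)
  with C(3) safe show False by (simp add: robber_safe_def)
qed

lemma square_le_four_balanced_product:
  assumes "n \<ge> (3 :: nat)"
  defines "h \<equiv> min (n - 2) ((n + 1) div 2)"
  shows "n\<^sup>2 \<le> 4 * (h * (n + 1 - h))"
proof (cases "n = 3")
  case True
  then show ?thesis by (simp add: h_def)
next
  case False
  with assms have h: "h = (n + 1) div 2" by (simp add: h_def)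
  show ?thesis
  proof (cases "even n")
    case True
    then obtain m where "n = 2 * m" by blast
    with h show ?thesis by (simp add: power2_eq_square algebra_simps)
  next
    case False
    then obtain m where "n = 2 * m + 1" by (rule oddE)
    with h show ?thesis by (simp add: power2_eq_square algebra_simps)
  qed
qed

theorem cEr_LK_ge:
  assumes n: "n \<ge> 3"
  shows "n\<^sup>2 \<le> 12 * cEr (LK_verts n) line_adj"
proof (rule ccontr)
  let ?rstep = "\<lambda>(C :: nat set set list) r r'. r' \<in> LK_verts n \<and> line_adj r r' \<and> {r, r'} \<notin> set C"
  \<comment> \<open>The cap \<open>n - 2\<close> only matters for \<open>n = 3\<close>.\<close>
  define h where "h = min (n - 2) ((n + 1) div 2)"
  obtain C where C: "length C = cEr (LK_verts n) line_adj" "set C \<subseteq> LK_edges n"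
    "\<forall>r\<in>LK_verts n. cops_force (edge_cop_step n) ?rstep
       (LK_edge_capture n) True C r"
    unfolding cEr_def by (rule LK_edge_game_attained)
  assume "\<not> ?thesis"
  then have few: "3 * length C < h * (n + 1 - h)"
    using C(1) square_le_four_balanced_product[OF n] unfolding h_def by linarith
  have h: "h \<le> n - 2" "1 \<le> h" using n by (auto simp: h_def)
  have "h * (n + 1 - h) \<le> h * n" using h(2) by simp
  with few have "3 * length C < h * n" by linarith
  moreover from n have "n \<ge> 2" by simp
  ultimately obtain r where safe: "robber_safe n (length C) h C r"
    using C(2) by (elim robber_safe_start)
  have "\<not> cops_force (edge_cop_step n) ?rstep (LK_edge_capture n) True C r"
    using robber_safe_step_restrictive[OF _ h(1) few] safe by (rule robber_escapes)
  with C(3) safe show False by (simp add: robber_safe_def)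
qed

theorem lemma4:
  fixes n :: nat
  assumes "n \<ge> 3"
  shows "cV (line_verts (Kn_verts n) Kn_adj) line_adj = 2 * (n - 2)
    \<and> real (cE (line_verts (Kn_verts n) Kn_adj) line_adj) \<ge> real n * (real n - 2) / 3
    \<and> real (cEr (line_verts (Kn_verts n) Kn_adj) line_adj) \<ge> (real n)^2 / 12"
proof (intro conjI)
  show "cV (LK_verts n) line_adj = 2 * (n - 2)" using assms by (rule cV_LK)
  have "real (n * (n - 2)) \<le> real (3 * cE (LK_verts n) line_adj)"
    using cE_LK_ge[OF assms] by (simp only: of_nat_le_iff)
  with assms show "real (cE (LK_verts n) line_adj) \<ge> real n * (real n - 2) / 3"
    by (simp add: of_nat_diff)
  have "real (n\<^sup>2) \<le> real (12 * cEr (LK_verts n) line_adj)"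
    using cEr_LK_ge[OF assms] by (simp only: of_nat_le_iff)
  then show "real (cEr (LK_verts n) line_adj) \<ge> (real n)\<^sup>2 / 12" by simp
qed

end
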